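(* Let $\Omega\subset\mathbb{R}^n$ be a bounded domain, $(d_1,d_2,f,\kappa)\in(0,\infty)^4$, and for $\ell\in\{1,2\}$ let $\gamma_\ell:\Omega\times\Omega\to[0,\infty)$ be measurable with $\int_\Omega\gamma_\ell(y,x)\,\mathrm{d}y=\int_\Omega\gamma_\ell(x,y)\,\mathrm{d}y\le\gamma_\infty<\infty$ for $x\in\Omega$, some $\gamma_\infty\ge1$. Let $(u^0,v^0)\in X^+\times X^+$ and let $(u,v)\in C^1([0,\infty),X^+\times X^+)$ be the solution to $$\partial_t u=d_1\Gamma_{\gamma_1}u-uv^2+f(1-u),\quad \partial_t v=d_2\Gamma_{\gamma_2}v+uv^2-(f+\kappa)v\ \text{ in }(0,\infty)\times\Omega,\quad (u,v)(0)=(u^0,v^0).$$ Then for $(t,x)\in[0,\infty)\times\Omega$, $$0\le u(t,x)\le1+e^{-ft}(\|u^0\|_\infty-1)_+,$$ $$0\le(u+v)(t,x)\le e^{-tf}\|u^0+v^0\|_\infty+\frac{1-e^{-tf}}{f}\Big[2\big(|d_1-d_2|\gamma_\infty+md_2\big)(1+\|u^0\|_\infty)+f\Big],$$ where $m:=\operatorname*{ess\,sup}_{x\in\Omega}\int_\Omega|(\gamma_1-\gamma_2)(x,y)|\,\mathrm{d}y\le2\gamma_\infty$. In particular $\limsup_{t\to\infty}\|u(t)\|_\infty\le1$, and if $\|u^0\|_\infty\le1$ then $\|u(t)\|_\infty\le1$ for all $t\ge0$.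
   Context: $X:=L_\infty(\Omega)$, $X^+:=\{z\in X: z\ge0\text{ a.e.}\}$, $\Gamma_\gamma z(x):=\int_\Omega\gamma(x,y)(z(y)-z(x))\,\mathrm{d}y$. *)

theory Defs
  imports "HOL-Analysis.Analysis" "HOL-Probability.Essential_Supremum"
begin

definition Linf_norm :: "'a measure \<Rightarrow> ('a \<Rightarrow> real) \<Rightarrow> ereal" where
  "Linf_norm M z = esssup M (\<lambda>x. ereal \<bar>z x\<bar>)"

definition in_Linf :: "'a measure \<Rightarrow> ('a \<Rightarrow> real) \<Rightarrow> bool" where
  "in_Linf M z \<longleftrightarrow> z \<in> borel_measurable M \<and> Linf_norm M z < \<infinity>"

definition in_Linf_pos :: "'a measure \<Rightarrow> ('a \<Rightarrow> real) \<Rightarrow> bool" where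
  "in_Linf_pos M z \<longleftrightarrow> in_Linf M z \<and> (AE x in M. 0 \<le> z x)"

text \<open>The map t -> u t is in C^1([0,oo), L-infinity(M)) with derivative t -> u' t
  (derivative and continuity taken in the L-infinity norm; one-sided at t = 0).\<close>
definition C1_Linf :: "'a measure \<Rightarrow> (real \<Rightarrow> 'a \<Rightarrow> real) \<Rightarrow> (real \<Rightarrow> 'a \<Rightarrow> real) \<Rightarrow> bool" where
  "C1_Linf M u u' \<longleftrightarrow>
     (\<forall>t\<ge>0. in_Linf M (u t) \<and> in_Linf M (u' t)) \<and>
     (\<forall>t\<ge>0. ((\<lambda>h. Linf_norm M (\<lambda>x. (u (t + h) x - u t x) / h - u' t x)) \<longlongrightarrow> 0)
                (at 0 within {-t..})) \<and>
     (\<forall>t\<ge>0. ((\<lambda>s. Linf_norm M (\<lambda>x. u' s x - u' t x)) \<longlongrightarrow> 0) (at t within {0..}))"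

definition Gamma_op :: "'a::euclidean_space set \<Rightarrow> ('a \<Rightarrow> 'a \<Rightarrow> real) \<Rightarrow> ('a \<Rightarrow> real) \<Rightarrow> 'a \<Rightarrow> real" where
  "Gamma_op \<Omega> \<gamma> z x = (\<integral>y. \<gamma> x y * (z y - z x) \<partial>lebesgue_on \<Omega>)"

definition admissible_kernel :: "'a::euclidean_space set \<Rightarrow> real \<Rightarrow> ('a \<Rightarrow> 'a \<Rightarrow> real) \<Rightarrow> bool" where
  "admissible_kernel \<Omega> ginf \<gamma> \<longleftrightarrow>
     (\<lambda>(x, y). \<gamma> x y) \<in> borel_measurable (lebesgue_on (\<Omega> \<times> \<Omega>)) \<and>
     (\<forall>x\<in>\<Omega>. \<forall>y\<in>\<Omega>. 0 \<le> \<gamma> x y) \<and>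
     (\<forall>x\<in>\<Omega>. (\<integral>\<^sup>+y. ennreal (\<gamma> y x) \<partial>lebesgue_on \<Omega>) = (\<integral>\<^sup>+y. ennreal (\<gamma> x y) \<partial>lebesgue_on \<Omega>)
            \<and> (\<integral>\<^sup>+y. ennreal (\<gamma> x y) \<partial>lebesgue_on \<Omega>) \<le> ennreal ginf)"

end

theory Submission
  imports Defs
begin

text \<open>
  Write N(t) = \<parallel>u(t)\<parallel> and W(t) = \<parallel>u(t) + v(t)\<parallel> for the sup norms.  Both are continuous and, in
  the sense of upper right Dini derivatives, satisfy N' \<le> f (1 - N) and W' \<le> K + f (1 - W) with
  K = (|d1 - d2| ginf + m d2) (1 + \<parallel>u0\<parallel>); comparison with the solutions of the linear ODEs
  N' = f (1 - N) and W' = K + f (1 - W) gives the exponential bounds.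
  The differential inequalities come from a discrete maximum principle: writing \<Gamma> for the
  operator with kernel \<gamma>, we have \<Gamma> z(x) \<le> (\<parallel>z\<parallel> - z(x)) \<integral>\<gamma>(x,y) dy, so an explicit Euler step
  z + h (d \<Gamma> z + f (c - z)) with h (d ginf + f) \<le> 1 stays below \<parallel>z\<parallel> + h f (c - \<parallel>z\<parallel>).  For u this
  applies directly, as the reaction term -u v^2 is nonpositive.  For u + v the right-hand side is
  d2 \<Gamma>2 (u + v) + (d1 \<Gamma>1 - d2 \<Gamma>2) u + f (1 - (u + v)) - \<kappa> v, and the middle term is at most
  \<parallel>u\<parallel> (|d1 - d2| ginf + d2 m) \<le> K by the bound already obtained for u.
\<close>

section \<open>Comparison with solutions of an ODE\<close>

lemma nonpos_if_right_Dini_nonpos: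
  fixes D :: "real \<Rightarrow> real"
  assumes cont: "continuous_on {0..} D" and D0: "D 0 \<le> 0"
    and Dini: "\<And>t \<epsilon>. 0 \<le> t \<Longrightarrow> 0 < D t \<Longrightarrow> 0 < \<epsilon> \<Longrightarrow>
                 \<forall>\<^sub>F s in at_right t. D s \<le> D t + (s - t) * \<epsilon>"
    and T: "0 \<le> T"
  shows "D T \<le> 0"
proof (rule ccontr)
  assume "\<not> D T \<le> 0"
  define \<epsilon> where "\<epsilon> = D T / (2 * (1 + T))"
  have DT: "0 < D T" using \<open>\<not> D T \<le> 0\<close> by simp
  have \<epsilon>: "0 < \<epsilon>" using DT T by (simp add: \<epsilon>_def)
  \<comment> \<open>The perturbed function E has a last zero s before T; D s > 0 there, so the Dini bound
      contradicts E > 0 on (s, T].\<close>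
  define E where "E t = D t - \<epsilon> * (1 + t)" for t
  have "E T = D T / 2" using T by (simp add: E_def \<epsilon>_def field_simps)
  then have ET: "0 < E T" using DT by simp
  have contE: "continuous_on {0..} E" unfolding E_def by (intro continuous_intros cont)
  define Z where "Z = {t \<in> {0..T}. E t \<le> 0}"
  have "closed Z"
    unfolding Z_def by (rule continuous_on_closed_Collect_le)
      (auto intro: continuous_on_subset[OF contE])
  moreover have "0 \<in> Z" using D0 \<epsilon> T by (simp add: Z_def E_def)
  moreover have "bdd_above Z" by (auto simp: Z_def bdd_above_def)
  ultimately have "Sup Z \<in> Z" using closed_contains_Sup by blast
  define s where "s = Sup Z"
  have s: "0 \<le> s" "s < T" "E s \<le> 0"
    using \<open>Sup Z \<in> Z\<close> ET by (auto simp: s_def Z_def less_eq_real_def)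
  have E_pos: "0 < E t" if "s < t" "t \<le> T" for t
  proof (rule ccontr)
    assume "\<not> 0 < E t"
    then have "t \<in> Z" using that s by (simp add: Z_def)
    then show False using \<open>bdd_above Z\<close> that by (auto simp: s_def dest: cSup_upper)
  qed
  have near_s: "\<forall>\<^sub>F t in at_right s. 0 < E t"
    using eventually_at_right_field s(2) by (fastforce intro: E_pos)
  have "(E \<longlongrightarrow> E s) (at_right s)"
    using contE s(1) by (auto simp: continuous_on_def intro: tendsto_within_subset)
  then have "0 \<le> E s"
    by (rule tendsto_lowerbound) (use near_s in \<open>auto elim: eventually_mono\<close>)
  moreover have "0 < \<epsilon> * (1 + s)" using \<epsilon> s(1) by simp
  ultimately have "0 < D s" by (simp add: E_def)
  have "\<forall>\<^sub>F t in at_right s. D t \<le> D s + (t - s) * (\<epsilon> / 2)"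
    by (rule Dini[OF s(1) \<open>0 < D s\<close>]) (use \<epsilon> in simp)
  moreover have "\<forall>\<^sub>F t in at_right s. s < t" by (simp add: eventually_at_right_less)
  ultimately have "\<forall>\<^sub>F t in at_right s. E t < 0"
  proof eventually_elim
    case (elim t)
    have "0 < (t - s) * (\<epsilon> / 2)" using elim \<epsilon> by simp
    then show ?case using elim s(3) by (simp add: E_def algebra_simps add_divide_distrib diff_divide_distrib)
  qed
  with near_s have "\<forall>\<^sub>F t in at_right s. False" by eventually_elim simp
  then show False by simp
qed

lemma Dini_subsolution_le_solution:
  fixes N g F :: "real \<Rightarrow> real"
  assumes F: "antimono F"
    and N_cont: "continuous_on {0..} N"
    and N_sub: "\<And>t \<epsilon>. 0 \<le> t \<Longrightarrow> 0 < \<epsilon> \<Longrightarrow>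
                 \<forall>\<^sub>F s in at_right t. N s \<le> N t + (s - t) * (F (N t) + \<epsilon>)"
    and g_sol: "\<And>t. 0 \<le> t \<Longrightarrow> (g has_real_derivative F (g t)) (at t)"
    and init: "N 0 \<le> g 0" and T: "0 \<le> T"
  shows "N T \<le> g T"
proof -
  have "continuous_on {0..} g"
    using g_sol by (auto intro!: continuous_at_imp_continuous_on DERIV_isCont)
  then have cont: "continuous_on {0..} (\<lambda>t. N t - g t)" by (intro continuous_intros N_cont)
  have Dini: "\<forall>\<^sub>F s in at_right t. N s - g s \<le> N t - g t + (s - t) * \<epsilon>"
    if t: "0 \<le> t" and gap: "0 < N t - g t" and \<epsilon>: "0 < \<epsilon>" for t \<epsilon>
  proof -
    have "((\<lambda>s. (g s - g t) / (s - t)) \<longlongrightarrow> F (g t)) (at_right t)"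
      using has_field_derivative_at_within[OF g_sol[OF t]] by (simp add: has_field_derivative_iff)
    then have "\<forall>\<^sub>F s in at_right t. F (g t) - \<epsilon> / 2 < (g s - g t) / (s - t)"
      using \<epsilon> by (intro order_tendstoD) auto
    moreover have "\<forall>\<^sub>F s in at_right t. N s \<le> N t + (s - t) * (F (N t) + \<epsilon> / 2)"
      by (rule N_sub) (use t \<epsilon> in auto)
    moreover have "\<forall>\<^sub>F s in at_right t. t < s" by (simp add: eventually_at_right_less)
    ultimately show ?thesis
    proof eventually_elim
      case (elim s)
      have "g t + (s - t) * (F (g t) - \<epsilon> / 2) \<le> g s"
        using elim by (simp add: field_simps)
      then have "N s - g s \<le> N t - g t + (s - t) * (F (N t) - F (g t)) + (s - t) * \<epsilon>"
        using elim by (simp add: algebra_simps add_divide_distrib diff_divide_distrib)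
      also have "\<dots> \<le> N t - g t + (s - t) * \<epsilon>"
        using F gap elim by (simp add: antimonoD mult_nonneg_nonpos)
      finally show ?case .
    qed
  qed
  show ?thesis
    using nonpos_if_right_Dini_nonpos[where D = "\<lambda>t. N t - g t", OF cont _ Dini T] init by simp
qed

section \<open>Essential suprema and derivatives in L-infinity\<close>

abbreviation norm_Linf :: "'a measure \<Rightarrow> ('a \<Rightarrow> real) \<Rightarrow> real" where
  "norm_Linf M z \<equiv> real_of_ereal (Linf_norm M z)"

lemma esssup_nonneg:
  fixes f :: "'a \<Rightarrow> ereal"
  assumes "emeasure M (space M) \<noteq> 0" "\<And>x. 0 \<le> f x"
  shows "0 \<le> esssup M f"
  using esssup_mono[of "\<lambda>x. 0" M f] esssup_const[OF assms(1), of "0::ereal"] assms(2) by simp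

lemma esssup_eq_ereal_real:
  fixes f :: "'a \<Rightarrow> real"
  assumes M: "emeasure M (space M) \<noteq> 0" and fin: "esssup M (\<lambda>x. ereal (f x)) < \<infinity>"
  shows "esssup M (\<lambda>x. ereal (f x)) = ereal (real_of_ereal (esssup M (\<lambda>x. ereal (f x))))"
proof -
  have "esssup M (\<lambda>x. ereal (f x)) \<noteq> - \<infinity>"
  proof
    assume "esssup M (\<lambda>x. ereal (f x)) = - \<infinity>"
    then have "AE x in M. False" using esssup_AE[of "\<lambda>x. ereal (f x)" M] by simp
    then show False using M ae_filter_eq_bot_iff[of M] by (simp add: trivial_limit_def)
  qed
  then show ?thesis using fin by (cases "esssup M (\<lambda>x. ereal (f x))") auto
qed

lemma AE_le_real_of_esssup:
  fixes f :: "'a \<Rightarrow> real"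
  assumes "emeasure M (space M) \<noteq> 0" "esssup M (\<lambda>x. ereal (f x)) < \<infinity>"
  shows "AE x in M. f x \<le> real_of_ereal (esssup M (\<lambda>x. ereal (f x)))"
  using esssup_AE[of "\<lambda>x. ereal (f x)" M] esssup_eq_ereal_real[OF assms]
  by (auto elim!: eventually_mono) (metis ereal_less_eq(3))

lemma Linf_norm_eq_ereal:
  assumes "in_Linf M z" "emeasure M (space M) \<noteq> 0"
  shows "Linf_norm M z = ereal (norm_Linf M z)"
  using assms esssup_eq_ereal_real[of M "\<lambda>x. \<bar>z x\<bar>"] by (simp add: in_Linf_def Linf_norm_def)

lemma AE_abs_le_norm_Linf:
  assumes "in_Linf M z" "emeasure M (space M) \<noteq> 0"
  shows "AE x in M. \<bar>z x\<bar> \<le> norm_Linf M z"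
  using assms AE_le_real_of_esssup[of M "\<lambda>x. \<bar>z x\<bar>"] by (simp add: in_Linf_def Linf_norm_def)

lemma norm_Linf_le:
  assumes "in_Linf M z" "emeasure M (space M) \<noteq> 0" "AE x in M. \<bar>z x\<bar> \<le> c"
  shows "norm_Linf M z \<le> c"
proof -
  have "Linf_norm M z \<le> ereal c"
    using assms unfolding Linf_norm_def in_Linf_def by (intro esssup_I) auto
  then show ?thesis using Linf_norm_eq_ereal[OF assms(1,2)] by (metis ereal_less_eq(3))
qed

lemma norm_Linf_nonneg:
  assumes "emeasure M (space M) \<noteq> 0"
  shows "0 \<le> norm_Linf M z"
  unfolding Linf_norm_def using esssup_nonneg[OF assms] by (simp add: real_of_ereal_pos)

lemma norm_Linf_diff_le:
  assumes z: "in_Linf M z" and w: "in_Linf M w" and M: "emeasure M (space M) \<noteq> 0"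
    and close: "AE x in M. \<bar>z x - w x\<bar> \<le> c"
  shows "\<bar>norm_Linf M z - norm_Linf M w\<bar> \<le> c"
proof -
  have "norm_Linf M z \<le> norm_Linf M w + c"
    using AE_abs_le_norm_Linf[OF w M] close by (intro norm_Linf_le[OF z M]) (auto elim: eventually_elim2)
  moreover have "norm_Linf M w \<le> norm_Linf M z + c"
    using AE_abs_le_norm_Linf[OF z M] close by (intro norm_Linf_le[OF w M]) (auto elim: eventually_elim2)
  ultimately show ?thesis by linarith
qed

lemma in_Linf_add:
  assumes "in_Linf M z" "in_Linf M w"
  shows "in_Linf M (\<lambda>x. z x + w x)"
proof -
  have "Linf_norm M (\<lambda>x. z x + w x) \<le> esssup M (\<lambda>x. ereal \<bar>z x\<bar> + ereal \<bar>w x\<bar>)"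
    using assms unfolding Linf_norm_def in_Linf_def by (intro esssup_mono) auto
  also have "\<dots> \<le> Linf_norm M z + Linf_norm M w"
    unfolding Linf_norm_def by (rule esssup_add)
  also have "\<dots> < \<infinity>" using assms by (simp add: in_Linf_def)
  finally show ?thesis using assms by (auto simp: in_Linf_def)
qed

lemma Linf_norm_AE_cong:
  assumes "z \<in> borel_measurable M" "w \<in> borel_measurable M" "AE x in M. z x = w x"
  shows "Linf_norm M z = Linf_norm M w"
  unfolding Linf_norm_def using assms by (intro esssup_AE_cong) (auto elim!: eventually_mono)

text \<open>The difference quotient condition of \<^const>\<open>C1_Linf\<close> at a single time, stated pointwise
  almost everywhere instead of through the norm, which makes it additive in z.\<close>

definition has_Linf_derivative ::
    "'a measure \<Rightarrow> (real \<Rightarrow> 'a \<Rightarrow> real) \<Rightarrow> ('a \<Rightarrow> real) \<Rightarrow> real \<Rightarrow> bool" where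
  "has_Linf_derivative M z D t \<longleftrightarrow> in_Linf M D \<and>
     (\<forall>\<epsilon>>0. \<forall>\<^sub>F s in at t within {0..}. AE x in M. \<bar>z s x - z t x - (s - t) * D x\<bar> \<le> \<epsilon> * \<bar>s - t\<bar>)"

lemma C1_Linf_imp_has_Linf_derivative:
  assumes C1: "C1_Linf M z z'" and t: "0 \<le> t"
  shows "has_Linf_derivative M z (z' t) t"
  unfolding has_Linf_derivative_def
proof (intro conjI allI impI)
  show "in_Linf M (z' t)" using C1 t by (simp add: C1_Linf_def)
  fix \<epsilon> :: real assume \<epsilon>: "0 < \<epsilon>"
  have "((\<lambda>h. Linf_norm M (\<lambda>x. (z (t + h) x - z t x) / h - z' t x)) \<longlongrightarrow> 0) (at 0 within {-t..})"
    using C1 t by (simp add: C1_Linf_def)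
  then have "\<forall>\<^sub>F h in at 0 within {-t..}. Linf_norm M (\<lambda>x. (z (t + h) x - z t x) / h - z' t x) < ereal \<epsilon>"
    using \<epsilon> by (intro order_tendstoD(2)) auto
  then obtain \<delta> where \<delta>: "0 < \<delta>" and quot: "\<And>h. -t \<le> h \<Longrightarrow> 0 < \<bar>h\<bar> \<Longrightarrow> \<bar>h\<bar> < \<delta> \<Longrightarrow>
      Linf_norm M (\<lambda>x. (z (t + h) x - z t x) / h - z' t x) < ereal \<epsilon>"
    by (auto simp: eventually_at dist_real_def)
  have "AE x in M. \<bar>z s x - z t x - (s - t) * z' t x\<bar> \<le> \<epsilon> * \<bar>s - t\<bar>"
    if s: "0 \<le> s" "0 < \<bar>s - t\<bar>" "\<bar>s - t\<bar> < \<delta>" for s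
    using esssup_AE[of "\<lambda>x. ereal \<bar>(z s x - z t x) / (s - t) - z' t x\<bar>" M]
  proof eventually_elim
    case (elim x)
    have "esssup M (\<lambda>x. ereal \<bar>(z s x - z t x) / (s - t) - z' t x\<bar>) < ereal \<epsilon>"
      using quot[of "s - t"] s by (simp add: Linf_norm_def)
    with elim have "ereal \<bar>(z s x - z t x) / (s - t) - z' t x\<bar> < ereal \<epsilon>"
      by (rule le_less_trans)
    then have "\<bar>(z s x - z t x) / (s - t) - z' t x\<bar> \<le> \<epsilon>" by simp
    then have "\<bar>s - t\<bar> * \<bar>(z s x - z t x) / (s - t) - z' t x\<bar> \<le> \<bar>s - t\<bar> * \<epsilon>"
      by (intro mult_left_mono) auto
    moreover have "(s - t) * ((z s x - z t x) / (s - t) - z' t x) = z s x - z t x - (s - t) * z' t x"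
      using s by (simp add: field_simps)
    ultimately show ?case by (metis abs_mult mult.commute)
  qed
  then show "\<forall>\<^sub>F s in at t within {0..}.
      AE x in M. \<bar>z s x - z t x - (s - t) * z' t x\<bar> \<le> \<epsilon> * \<bar>s - t\<bar>"
    using \<delta> by (auto simp: eventually_at dist_real_def)
qed

lemma has_Linf_derivative_add:
  assumes "has_Linf_derivative M z D t" "has_Linf_derivative M w E t"
  shows "has_Linf_derivative M (\<lambda>s x. z s x + w s x) (\<lambda>x. D x + E x) t"
  unfolding has_Linf_derivative_def
proof (intro conjI allI impI)
  show "in_Linf M (\<lambda>x. D x + E x)"
    using assms by (intro in_Linf_add) (auto simp: has_Linf_derivative_def)
  fix \<epsilon> :: real assume "0 < \<epsilon>"
  then have half: "0 < \<epsilon> / 2" by simp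
  have "\<forall>\<^sub>F s in at t within {0..}. AE x in M. \<bar>z s x - z t x - (s - t) * D x\<bar> \<le> \<epsilon> / 2 * \<bar>s - t\<bar>"
    using assms(1)[unfolded has_Linf_derivative_def, THEN conjunct2, rule_format, OF half] .
  moreover have "\<forall>\<^sub>F s in at t within {0..}. AE x in M. \<bar>w s x - w t x - (s - t) * E x\<bar> \<le> \<epsilon> / 2 * \<bar>s - t\<bar>"
    using assms(2)[unfolded has_Linf_derivative_def, THEN conjunct2, rule_format, OF half] .
  ultimately show "\<forall>\<^sub>F s in at t within {0..}.
      AE x in M. \<bar>z s x + w s x - (z t x + w t x) - (s - t) * (D x + E x)\<bar> \<le> \<epsilon> * \<bar>s - t\<bar>"
  proof eventually_elim
    case (elim s)
    from elim show ?case
    proof eventually_elim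
      case (elim x)
      have "\<bar>z s x + w s x - (z t x + w t x) - (s - t) * (D x + E x)\<bar>
          \<le> \<bar>z s x - z t x - (s - t) * D x\<bar> + \<bar>w s x - w t x - (s - t) * E x\<bar>"
        by (simp add: algebra_simps abs_triangle_ineq[THEN order_trans])
      with elim show ?case by simp
    qed
  qed
qed

lemma has_Linf_derivative_imp_tendsto_norm:
  assumes M: "emeasure M (space M) \<noteq> 0" and z: "\<And>s. 0 \<le> s \<Longrightarrow> in_Linf M (z s)"
    and deriv: "has_Linf_derivative M z D t" and t: "0 \<le> t"
  shows "((\<lambda>s. norm_Linf M (z s)) \<longlongrightarrow> norm_Linf M (z t)) (at t within {0..})"
proof -
  define C where "C = norm_Linf M D + 1"
  have D_bound: "AE x in M. \<bar>D x\<bar> \<le> norm_Linf M D"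
    using deriv M by (intro AE_abs_le_norm_Linf) (simp_all add: has_Linf_derivative_def)
  have "\<forall>\<^sub>F s in at t within {0..}. AE x in M. \<bar>z s x - z t x - (s - t) * D x\<bar> \<le> 1 * \<bar>s - t\<bar>"
    using deriv[unfolded has_Linf_derivative_def, THEN conjunct2, rule_format, OF zero_less_one] .
  moreover have "\<forall>\<^sub>F s in at t within {0..}. 0 \<le> s" by (simp add: eventually_at_filter)
  ultimately have "\<forall>\<^sub>F s in at t within {0..}. 0 \<le> s \<and>
      (AE x in M. \<bar>z s x - z t x - (s - t) * D x\<bar> \<le> 1 * \<bar>s - t\<bar>)"
    by (rule eventually_conj[rotated])
  then have close: "\<forall>\<^sub>F s in at t within {0..}.
      norm (norm_Linf M (z s) - norm_Linf M (z t)) \<le> C * \<bar>s - t\<bar>"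
  proof (elim eventually_mono conjE)
    fix s :: real assume s: "0 \<le> s"
      and step: "AE x in M. \<bar>z s x - z t x - (s - t) * D x\<bar> \<le> 1 * \<bar>s - t\<bar>"
    from step D_bound have "AE x in M. \<bar>z s x - z t x\<bar> \<le> C * \<bar>s - t\<bar>"
    proof eventually_elim
      case (elim x)
      have "\<bar>(s - t) * D x\<bar> \<le> \<bar>s - t\<bar> * norm_Linf M D"
        using elim(2) by (simp add: abs_mult mult_left_mono)
      then show ?case using elim(1) by (simp add: C_def algebra_simps)
    qed
    then show "norm (norm_Linf M (z s) - norm_Linf M (z t)) \<le> C * \<bar>s - t\<bar>"
      using norm_Linf_diff_le[OF z[OF s] z[OF t] M] by simp
  qed
  have "((\<lambda>s. C * \<bar>s - t\<bar>) \<longlongrightarrow> C * \<bar>t - t\<bar>) (at t within {0..})"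
    by (intro tendsto_intros)
  then have "((\<lambda>s. C * \<bar>s - t\<bar>) \<longlongrightarrow> 0) (at t within {0..})" by simp
  with close show ?thesis by (rule LIM_zero_cancel[OF Lim_null_comparison])
qed

section \<open>Sections of Lebesgue measurable kernels\<close>

lemma lebesgue_pair_AE_eq_borel:
  fixes F :: "'a::euclidean_space \<times> 'b::euclidean_space \<Rightarrow> real"
  assumes "F \<in> borel_measurable lebesgue"
  obtains G where "G \<in> borel_measurable (lborel \<Otimes>\<^sub>M lborel)"
    "AE x in lebesgue. AE y in lebesgue. F (x, y) = G (x, y)"
proof -
  obtain G where G: "G \<in> borel_measurable lborel" "AE p in lborel. F p = G p"
    using completion_ex_borel_measurable_real assms by blast
  have "AE p in lborel \<Otimes>\<^sub>M lborel. F p = G p"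
    using G(2) by (simp only: lborel_prod)
  then have "AE x in lborel. AE y in lborel. F (x, y) = G (x, y)"
    by (rule pair_sigma_finite.AE_pair[rotated])
      (simp add: pair_sigma_finite_def lborel.sigma_finite_measure_axioms)
  then have "AE x in lebesgue. AE y in lebesgue. F (x, y) = G (x, y)"
    by (intro AE_completion) (auto elim!: eventually_mono intro: AE_completion)
  with G(1) show ?thesis by (intro that) (simp_all add: lborel_prod)
qed

lemma AE_lebesgue_measurable_section:
  fixes F :: "'a::euclidean_space \<times> 'b::euclidean_space \<Rightarrow> real"
  assumes "F \<in> borel_measurable lebesgue"
  shows "AE x in lebesgue. (\<lambda>y. F (x, y)) \<in> borel_measurable lebesgue"
proof -
  obtain G where G: "G \<in> borel_measurable (lborel \<Otimes>\<^sub>M lborel)"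
    "AE x in lebesgue. AE y in lebesgue. F (x, y) = G (x, y)"
    using lebesgue_pair_AE_eq_borel[OF assms] by blast
  from G(2) show ?thesis
  proof eventually_elim
    case (elim x)
    have "(\<lambda>y. G (x, y)) \<in> borel_measurable lebesgue"
      using measurable_Pair2[OF G(1)] by (intro measurable_completion) simp
    then show ?case by (rule borel_measurable_AE) (use elim in \<open>auto elim: eventually_mono\<close>)
  qed
qed

lemma lebesgue_measurable_integral_section:
  fixes F :: "'a::euclidean_space \<times> 'b::euclidean_space \<Rightarrow> real"
  assumes F: "F \<in> borel_measurable lebesgue"
  shows "(\<lambda>x. \<integral>y. F (x, y) \<partial>lebesgue) \<in> borel_measurable lebesgue"
proof -
  obtain G where G: "G \<in> borel_measurable (lborel \<Otimes>\<^sub>M lborel)"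
    "AE x in lebesgue. AE y in lebesgue. F (x, y) = G (x, y)"
    using lebesgue_pair_AE_eq_borel[OF F] by blast
  have "(\<lambda>x. \<integral>y. G (x, y) \<partial>lborel) \<in> borel_measurable lborel"
    using G(1) by (intro lborel.borel_measurable_lebesgue_integral) (simp add: case_prod_beta')
  then have "(\<lambda>x. \<integral>y. G (x, y) \<partial>lborel) \<in> borel_measurable lebesgue"
    by (rule measurable_completion)
  moreover have "AE x in lebesgue. (\<integral>y. G (x, y) \<partial>lborel) = (\<integral>y. F (x, y) \<partial>lebesgue)"
    using G(2) AE_lebesgue_measurable_section[OF F]
  proof eventually_elim
    case (elim x)
    have Gx: "(\<lambda>y. G (x, y)) \<in> borel_measurable lborel"
      using measurable_Pair2[OF G(1)] by simp
    have "(\<integral>y. F (x, y) \<partial>lebesgue) = (\<integral>y. G (x, y) \<partial>lebesgue)"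
      using elim measurable_completion[OF Gx] by (intro integral_cong_AE) auto
    also have "\<dots> = (\<integral>y. G (x, y) \<partial>lborel)"
      using Gx by (rule integral_completion)
    finally show ?case by simp
  qed
  ultimately show ?thesis by (rule borel_measurable_AE)
qed

lemma admissible_kernel_rows:
  fixes \<gamma> :: "'a::euclidean_space \<Rightarrow> 'a \<Rightarrow> real"
  assumes ker: "admissible_kernel \<Omega> g \<gamma>" and \<Omega>: "open \<Omega>" and g: "0 \<le> g"
  shows "AE x in lebesgue_on \<Omega>. integrable (lebesgue_on \<Omega>) (\<gamma> x) \<and> (\<forall>y\<in>\<Omega>. 0 \<le> \<gamma> x y)
           \<and> (\<integral>y. \<gamma> x y \<partial>lebesgue_on \<Omega>) \<le> g"
proof -
  have \<Omega>_sets: "\<Omega> \<in> sets lebesgue" "\<Omega> \<times> \<Omega> \<in> sets lebesgue"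
    using \<Omega> by (simp_all add: borel_open open_Times)
  then have \<Omega>_space: "\<Omega> \<inter> space lebesgue \<in> sets lebesgue" by simp
  define F where "F p = (if p \<in> \<Omega> \<times> \<Omega> then (\<lambda>(x, y). \<gamma> x y) p else 0)" for p
  have "F \<in> borel_measurable lebesgue"
    using ker \<Omega>_sets unfolding F_def admissible_kernel_def by (simp add: borel_measurable_if)
  have "AE x in lebesgue. x \<in> \<Omega> \<longrightarrow> integrable (lebesgue_on \<Omega>) (\<gamma> x) \<and> (\<forall>y\<in>\<Omega>. 0 \<le> \<gamma> x y)
           \<and> (\<integral>y. \<gamma> x y \<partial>lebesgue_on \<Omega>) \<le> g"
    using AE_lebesgue_measurable_section[OF \<open>F \<in> borel_measurable lebesgue\<close>]
  proof (rule eventually_mono, intro impI)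
    fix x assume x: "x \<in> \<Omega>" and "(\<lambda>y. F (x, y)) \<in> borel_measurable lebesgue"
    then have meas: "\<gamma> x \<in> borel_measurable (lebesgue_on \<Omega>)"
      by (intro borel_measurable_if_D) (simp add: F_def cong: if_cong)
    have nonneg: "\<forall>y\<in>\<Omega>. 0 \<le> \<gamma> x y" and bound: "(\<integral>\<^sup>+y. ennreal (\<gamma> x y) \<partial>lebesgue_on \<Omega>) \<le> ennreal g"
      using ker x unfolding admissible_kernel_def by auto
    have AE_nonneg: "AE y in lebesgue_on \<Omega>. 0 \<le> \<gamma> x y"
      using nonneg unfolding AE_restrict_space_iff[OF \<Omega>_space] by simp
    have "integrable (lebesgue_on \<Omega>) (\<gamma> x)"
      using bound by (intro integrableI_nonneg[OF meas AE_nonneg]) (simp add: le_less_trans)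
    moreover have "(\<integral>y. \<gamma> x y \<partial>lebesgue_on \<Omega>) \<le> g"
      using bound g by (simp add: integral_eq_nn_integral[OF meas AE_nonneg] enn2real_leI)
    ultimately show "integrable (lebesgue_on \<Omega>) (\<gamma> x) \<and> (\<forall>y\<in>\<Omega>. 0 \<le> \<gamma> x y)
           \<and> (\<integral>y. \<gamma> x y \<partial>lebesgue_on \<Omega>) \<le> g"
      using nonneg by blast
  qed
  then show ?thesis unfolding AE_restrict_space_iff[OF \<Omega>_space] .
qed

lemma borel_measurable_kernel_distance:
  fixes \<gamma>1 \<gamma>2 :: "'a::euclidean_space \<Rightarrow> 'a \<Rightarrow> real"
  assumes "(\<lambda>(x, y). \<gamma>1 x y) \<in> borel_measurable (lebesgue_on (\<Omega> \<times> \<Omega>))"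
    and "(\<lambda>(x, y). \<gamma>2 x y) \<in> borel_measurable (lebesgue_on (\<Omega> \<times> \<Omega>))"
    and \<Omega>: "open \<Omega>"
  shows "(\<lambda>x. \<integral>y. \<bar>\<gamma>1 x y - \<gamma>2 x y\<bar> \<partial>lebesgue_on \<Omega>) \<in> borel_measurable (lebesgue_on \<Omega>)"
proof -
  have \<Omega>_sets: "\<Omega> \<in> sets lebesgue" "\<Omega> \<times> \<Omega> \<in> sets lebesgue"
    using \<Omega> by (simp_all add: borel_open open_Times)
  define F where "F p = (if p \<in> \<Omega> \<times> \<Omega> then (\<lambda>(x, y). \<bar>\<gamma>1 x y - \<gamma>2 x y\<bar>) p else 0)" for p
  have "(\<lambda>(x, y). \<bar>\<gamma>1 x y - \<gamma>2 x y\<bar>) \<in> borel_measurable (lebesgue_on (\<Omega> \<times> \<Omega>))"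
    using assms(1,2) by (simp add: case_prod_beta' borel_measurable_abs borel_measurable_diff)
  then have "F \<in> borel_measurable lebesgue"
    using \<Omega>_sets unfolding F_def by (simp add: borel_measurable_if)
  then have "(\<lambda>x. \<integral>y. F (x, y) \<partial>lebesgue) \<in> borel_measurable lebesgue"
    by (rule lebesgue_measurable_integral_section)
  moreover have "(\<integral>y. F (x, y) \<partial>lebesgue) =
      (if x \<in> \<Omega> then \<integral>y. \<bar>\<gamma>1 x y - \<gamma>2 x y\<bar> \<partial>lebesgue_on \<Omega> else 0)" for x
    using \<Omega>_sets by (auto simp: F_def integral_restrict_space indicator_def intro!: Bochner_Integration.integral_cong)
  ultimately show ?thesis using \<Omega>_sets by (simp add: borel_measurable_if)
qed

lemma AE_kernel_distance_le:
  fixes \<gamma>1 \<gamma>2 :: "'a::euclidean_space \<Rightarrow> 'a \<Rightarrow> real"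
  assumes "admissible_kernel \<Omega> g \<gamma>1" "admissible_kernel \<Omega> g \<gamma>2" "open \<Omega>" "0 \<le> g"
  shows "AE x in lebesgue_on \<Omega>. (\<integral>y. \<bar>\<gamma>1 x y - \<gamma>2 x y\<bar> \<partial>lebesgue_on \<Omega>) \<le> 2 * g"
  using admissible_kernel_rows[OF assms(1,3,4)] admissible_kernel_rows[OF assms(2,3,4)]
proof eventually_elim
  case (elim x)
  have "(\<integral>y. \<bar>\<gamma>1 x y - \<gamma>2 x y\<bar> \<partial>lebesgue_on \<Omega>) \<le> (\<integral>y. \<gamma>1 x y + \<gamma>2 x y \<partial>lebesgue_on \<Omega>)"
    using elim by (intro integral_mono) (auto simp: abs_le_iff)
  also have "\<dots> = (\<integral>y. \<gamma>1 x y \<partial>lebesgue_on \<Omega>) + (\<integral>y. \<gamma>2 x y \<partial>lebesgue_on \<Omega>)"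
    using elim by (intro Bochner_Integration.integral_add) auto
  finally show ?case using elim by simp
qed

section \<open>The nonlocal diffusion operator\<close>

lemma Gamma_op_integrable:
  fixes \<gamma> :: "'a::euclidean_space \<Rightarrow> 'a \<Rightarrow> real"
  assumes \<gamma>: "integrable (lebesgue_on \<Omega>) (\<gamma> x)"
    and z: "z \<in> borel_measurable (lebesgue_on \<Omega>)" "AE y in lebesgue_on \<Omega>. \<bar>z y\<bar> \<le> B"
  shows "integrable (lebesgue_on \<Omega>) (\<lambda>y. \<gamma> x y * (z y - z x))"
proof (rule Bochner_Integration.integrable_bound)
  show "integrable (lebesgue_on \<Omega>) (\<lambda>y. \<gamma> x y * (B + \<bar>z x\<bar>))"
    using \<gamma> by (rule integrable_mult_left)
  show "(\<lambda>y. \<gamma> x y * (z y - z x)) \<in> borel_measurable (lebesgue_on \<Omega>)"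
    using borel_measurable_integrable[OF \<gamma>] z(1) by measurable
  show "AE y in lebesgue_on \<Omega>. norm (\<gamma> x y * (z y - z x)) \<le> norm (\<gamma> x y * (B + \<bar>z x\<bar>))"
    using z(2)
  proof eventually_elim
    case (elim y)
    then have "\<bar>\<gamma> x y\<bar> * \<bar>z y - z x\<bar> \<le> \<bar>\<gamma> x y\<bar> * \<bar>B + \<bar>z x\<bar>\<bar>"
      by (intro mult_left_mono) auto
    then show ?case by (simp add: abs_mult)
  qed
qed

lemma Gamma_op_le:
  fixes \<gamma> :: "'a::euclidean_space \<Rightarrow> 'a \<Rightarrow> real"
  assumes \<gamma>: "integrable (lebesgue_on \<Omega>) (\<gamma> x)" "\<forall>y\<in>\<Omega>. 0 \<le> \<gamma> x y"
    and z: "z \<in> borel_measurable (lebesgue_on \<Omega>)" "AE y in lebesgue_on \<Omega>. \<bar>z y\<bar> \<le> Z"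
  shows "Gamma_op \<Omega> \<gamma> z x \<le> (Z - z x) * (\<integral>y. \<gamma> x y \<partial>lebesgue_on \<Omega>)"
proof -
  have "Gamma_op \<Omega> \<gamma> z x \<le> (\<integral>y. \<gamma> x y * (Z - z x) \<partial>lebesgue_on \<Omega>)"
    unfolding Gamma_op_def
  proof (rule integral_mono_AE)
    show "integrable (lebesgue_on \<Omega>) (\<lambda>y. \<gamma> x y * (z y - z x))"
      by (rule Gamma_op_integrable[where \<gamma>=\<gamma> and x=x, OF \<gamma>(1) z])
    show "integrable (lebesgue_on \<Omega>) (\<lambda>y. \<gamma> x y * (Z - z x))"
      using \<gamma>(1) by (rule integrable_mult_left)
    show "AE y in lebesgue_on \<Omega>. \<gamma> x y * (z y - z x) \<le> \<gamma> x y * (Z - z x)"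
      using z(2) AE_space by eventually_elim (use \<gamma>(2) in \<open>auto intro!: mult_left_mono\<close>)
  qed
  then show ?thesis by (simp add: mult.commute)
qed

lemma Gamma_op_add:
  fixes \<gamma> :: "'a::euclidean_space \<Rightarrow> 'a \<Rightarrow> real"
  assumes \<gamma>: "integrable (lebesgue_on \<Omega>) (\<gamma> x)"
    and a: "a \<in> borel_measurable (lebesgue_on \<Omega>)" "AE y in lebesgue_on \<Omega>. \<bar>a y\<bar> \<le> A"
    and b: "b \<in> borel_measurable (lebesgue_on \<Omega>)" "AE y in lebesgue_on \<Omega>. \<bar>b y\<bar> \<le> B"
  shows "Gamma_op \<Omega> \<gamma> (\<lambda>y. a y + b y) x = Gamma_op \<Omega> \<gamma> a x + Gamma_op \<Omega> \<gamma> b x"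
proof -
  have "Gamma_op \<Omega> \<gamma> (\<lambda>y. a y + b y) x
      = (\<integral>y. \<gamma> x y * (a y - a x) + \<gamma> x y * (b y - b x) \<partial>lebesgue_on \<Omega>)"
    unfolding Gamma_op_def by (rule Bochner_Integration.integral_cong) (auto simp: algebra_simps)
  also have "\<dots> = Gamma_op \<Omega> \<gamma> a x + Gamma_op \<Omega> \<gamma> b x"
    unfolding Gamma_op_def
    by (rule Bochner_Integration.integral_add[OF Gamma_op_integrable[where \<gamma>=\<gamma> and x=x, OF \<gamma> a]
      Gamma_op_integrable[where \<gamma>=\<gamma> and x=x, OF \<gamma> b]])
  finally show ?thesis .
qed

lemma Gamma_op_diff_le:
  fixes \<gamma> \<gamma>' :: "'a::euclidean_space \<Rightarrow> 'a \<Rightarrow> real"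
  assumes \<gamma>: "integrable (lebesgue_on \<Omega>) (\<gamma> x)" "\<forall>y\<in>\<Omega>. 0 \<le> \<gamma> x y"
    and \<gamma>': "integrable (lebesgue_on \<Omega>) (\<gamma>' x)"
    and z: "z \<in> borel_measurable (lebesgue_on \<Omega>)" "AE y in lebesgue_on \<Omega>. 0 \<le> z y \<and> z y \<le> U"
    and zx: "0 \<le> z x" "z x \<le> U" and d2: "0 \<le> d2"
  shows "d1 * Gamma_op \<Omega> \<gamma> z x - d2 * Gamma_op \<Omega> \<gamma>' z x
     \<le> U * (\<bar>d1 - d2\<bar> * (\<integral>y. \<gamma> x y \<partial>lebesgue_on \<Omega>) + d2 * (\<integral>y. \<bar>\<gamma> x y - \<gamma>' x y\<bar> \<partial>lebesgue_on \<Omega>))"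
proof -
  let ?M = "lebesgue_on \<Omega>"
  have z_bound: "AE y in ?M. \<bar>z y\<bar> \<le> U" using z(2) by eventually_elim auto
  note i1 = Gamma_op_integrable[where \<gamma>=\<gamma> and x=x, OF \<gamma>(1) z(1) z_bound]
  note i2 = Gamma_op_integrable[where \<gamma>=\<gamma>' and x=x, OF \<gamma>' z(1) z_bound]
  have i3: "integrable ?M (\<lambda>y. \<bar>\<gamma> x y - \<gamma>' x y\<bar>)"
    using \<gamma>(1) \<gamma>' by (intro integrable_abs Bochner_Integration.integrable_diff)
  have "d1 * Gamma_op \<Omega> \<gamma> z x - d2 * Gamma_op \<Omega> \<gamma>' z x
      = (\<integral>y. d1 * (\<gamma> x y * (z y - z x)) - d2 * (\<gamma>' x y * (z y - z x)) \<partial>?M)"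
    unfolding Gamma_op_def using i1 i2 by (simp add: Bochner_Integration.integral_diff)
  also have "\<dots> = (\<integral>y. ((d1 - d2) * \<gamma> x y + d2 * (\<gamma> x y - \<gamma>' x y)) * (z y - z x) \<partial>?M)"
    by (rule Bochner_Integration.integral_cong) (simp_all add: algebra_simps)
  also have "\<dots> \<le> (\<integral>y. U * (\<bar>d1 - d2\<bar> * \<gamma> x y) + U * (d2 * \<bar>\<gamma> x y - \<gamma>' x y\<bar>) \<partial>?M)"
  proof (rule integral_mono_AE)
    show "integrable ?M (\<lambda>y. ((d1 - d2) * \<gamma> x y + d2 * (\<gamma> x y - \<gamma>' x y)) * (z y - z x))"
      using Bochner_Integration.integrable_diff[OF integrable_mult_right[OF i1, of d1] integrable_mult_right[OF i2, of d2]]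
      by (simp add: algebra_simps)
    show "integrable ?M (\<lambda>y. U * (\<bar>d1 - d2\<bar> * \<gamma> x y) + U * (d2 * \<bar>\<gamma> x y - \<gamma>' x y\<bar>))"
      using \<gamma>(1) i3 by (intro Bochner_Integration.integrable_add integrable_mult_right)
    show "AE y in ?M. ((d1 - d2) * \<gamma> x y + d2 * (\<gamma> x y - \<gamma>' x y)) * (z y - z x)
        \<le> U * (\<bar>d1 - d2\<bar> * \<gamma> x y) + U * (d2 * \<bar>\<gamma> x y - \<gamma>' x y\<bar>)"
      using z(2) AE_space
    proof eventually_elim
      case (elim y)
      have "0 \<le> \<gamma> x y" using \<gamma>(2) elim by auto
      then have "\<bar>(d1 - d2) * \<gamma> x y + d2 * (\<gamma> x y - \<gamma>' x y)\<bar> \<le> \<bar>d1 - d2\<bar> * \<gamma> x y + d2 * \<bar>\<gamma> x y - \<gamma>' x y\<bar>"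
        using d2 by (auto intro!: abs_triangle_ineq[THEN order_trans] simp: abs_mult)
      moreover have "\<bar>z y - z x\<bar> \<le> U" using elim zx by linarith
      ultimately have "\<bar>((d1 - d2) * \<gamma> x y + d2 * (\<gamma> x y - \<gamma>' x y)) * (z y - z x)\<bar>
          \<le> (\<bar>d1 - d2\<bar> * \<gamma> x y + d2 * \<bar>\<gamma> x y - \<gamma>' x y\<bar>) * U"
        unfolding abs_mult using \<open>0 \<le> \<gamma> x y\<close> d2 by (intro mult_mono) auto
      then show ?case by (simp add: algebra_simps)
    qed
  qed
  also have "\<dots> = U * (\<bar>d1 - d2\<bar> * (\<integral>y. \<gamma> x y \<partial>?M) + d2 * (\<integral>y. \<bar>\<gamma> x y - \<gamma>' x y\<bar> \<partial>?M))"
    using \<gamma>(1) i3 by (simp add: Bochner_Integration.integral_add distrib_left)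
  finally show ?thesis .
qed

section \<open>Exponential bounds for the sup norm\<close>

text \<open>For h (d g + f) \<le> 1 the explicit Euler step is nondecreasing in the current value a,
  so it is bounded by its value at the upper bound N of a.\<close>

lemma explicit_Euler_step_le:
  fixes a N G h d f c g :: real
  assumes "a \<le> N" "0 \<le> h" "0 \<le> d" "0 \<le> g" "h * (d * g + f) \<le> 1" "G \<le> (N - a) * g"
  shows "a + h * (d * G + f * (c - a)) \<le> N + h * f * (c - N)"
proof -
  have "h * d * G \<le> h * d * ((N - a) * g)"
    using assms by (intro mult_left_mono) auto
  moreover have "0 \<le> (N - a) * (1 - h * (d * g + f))"
    using assms by (intro mult_nonneg_nonneg) auto
  ultimately show ?thesis by (simp add: algebra_simps)
qed

lemma norm_Linf_right_Dini_le:
  fixes \<Omega> :: "'a::euclidean_space set" and \<gamma> :: "'a \<Rightarrow> 'a \<Rightarrow> real" and z :: "real \<Rightarrow> 'a \<Rightarrow> real"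
  defines "M \<equiv> lebesgue_on \<Omega>"
  assumes M: "emeasure M \<Omega> \<noteq> 0"
    and rows: "AE x in M. integrable M (\<gamma> x) \<and> (\<forall>y\<in>\<Omega>. 0 \<le> \<gamma> x y) \<and> (\<integral>y. \<gamma> x y \<partial>M) \<le> g"
    and d: "0 \<le> d"
    and z: "\<And>s. 0 \<le> s \<Longrightarrow> in_Linf M (z s)" "\<And>s. 0 \<le> s \<Longrightarrow> AE x in M. 0 \<le> z s x"
    and deriv: "has_Linf_derivative M z D t"
    and sub: "AE x in M. D x \<le> d * Gamma_op \<Omega> \<gamma> (z t) x + f * (c - z t x)"
    and t: "0 \<le> t" and \<epsilon>: "0 < \<epsilon>"
  shows "\<forall>\<^sub>F s in at_right t.
           norm_Linf M (z s) \<le> norm_Linf M (z t) + (s - t) * (f * (c - norm_Linf M (z t)) + \<epsilon>)"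
proof -
  have M': "emeasure M (space M) \<noteq> 0" using M by (simp add: M_def)
  define N where "N = norm_Linf M (z t)"
  have "\<forall>\<^sub>F s in at_right t. AE x in M. \<bar>z s x - z t x - (s - t) * D x\<bar> \<le> \<epsilon> * \<bar>s - t\<bar>"
    using deriv \<epsilon> t unfolding has_Linf_derivative_def by (auto elim!: filter_leD[OF at_le, rotated])
  moreover have "\<forall>\<^sub>F s in at_right t. (s - t) * (d * g + f) < 1"
  proof -
    have "((\<lambda>s. (s - t) * (d * g + f)) \<longlongrightarrow> (t - t) * (d * g + f)) (at_right t)"
      by (intro tendsto_intros)
    from order_tendstoD(2)[OF this, of 1] show ?thesis by simp
  qed
  moreover have "\<forall>\<^sub>F s in at_right t. t < s" by (simp add: eventually_at_right_less)
  ultimately show ?thesis unfolding N_def[symmetric]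
  proof eventually_elim
    case (elim s)
    then have s: "t < s" "(s - t) * (d * g + f) \<le> 1" by auto
    then have "0 \<le> s" using t by simp
    have "AE x in M. \<bar>z s x\<bar> \<le> N + (s - t) * (f * (c - N) + \<epsilon>)"
      using elim(1) rows sub z(2)[OF \<open>0 \<le> s\<close>] AE_abs_le_norm_Linf[OF z(1)[OF t] M', folded N_def]
    proof eventually_elim
      case (elim x)
      let ?g = "\<integral>y. \<gamma> x y \<partial>M"
      have "0 \<le> ?g" using elim by (intro integral_nonneg_AE AE_I2) (auto simp: M_def)
      have Gamma: "Gamma_op \<Omega> \<gamma> (z t) x \<le> (N - z t x) * ?g"
        unfolding N_def using elim z(1)[OF t] AE_abs_le_norm_Linf[OF z(1)[OF t] M']
        by (intro Gamma_op_le[where \<Omega>=\<Omega> and \<gamma>=\<gamma> and x=x, folded M_def]) (auto simp: in_Linf_def)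
      have "(s - t) * (d * ?g + f) \<le> (s - t) * (d * g + f)"
        using s elim d by (intro mult_left_mono add_right_mono) auto
      then have "(s - t) * (d * ?g + f) \<le> 1" using s by linarith
      then have "z t x + (s - t) * (d * Gamma_op \<Omega> \<gamma> (z t) x + f * (c - z t x))
          \<le> N + (s - t) * f * (c - N)"
        using Gamma elim s d \<open>0 \<le> ?g\<close> by (intro explicit_Euler_step_le) auto
      moreover have "z s x \<le> z t x + (s - t) * D x + \<epsilon> * (s - t)"
        using elim s by (simp add: abs_le_iff)
      moreover have "(s - t) * D x \<le> (s - t) * (d * Gamma_op \<Omega> \<gamma> (z t) x + f * (c - z t x))"
        using elim s by (intro mult_left_mono) auto
      ultimately show ?case using elim by (simp add: algebra_simps)
    qed
    then show ?case by (rule norm_Linf_le[OF z(1)[OF \<open>0 \<le> s\<close>] M'])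
  qed
qed

lemma norm_Linf_le_exp_decay:
  fixes \<Omega> :: "'a::euclidean_space set" and \<gamma> :: "'a \<Rightarrow> 'a \<Rightarrow> real" and z z' :: "real \<Rightarrow> 'a \<Rightarrow> real"
  defines "M \<equiv> lebesgue_on \<Omega>"
  assumes \<Omega>: "open \<Omega>" and M: "emeasure M \<Omega> \<noteq> 0"
    and ker: "admissible_kernel \<Omega> g \<gamma>" and d: "0 \<le> d" and g: "0 \<le> g" and f: "0 < f"
    and z: "\<And>s. 0 \<le> s \<Longrightarrow> in_Linf M (z s)" "\<And>s. 0 \<le> s \<Longrightarrow> AE x in M. 0 \<le> z s x"
    and deriv: "\<And>s. 0 \<le> s \<Longrightarrow> has_Linf_derivative M z (z' s) s"
    and sub: "\<And>s. 0 \<le> s \<Longrightarrow> AE x in M. z' s x \<le> d * Gamma_op \<Omega> \<gamma> (z s) x + f * (c - z s x)"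
    and init: "norm_Linf M (z 0) \<le> c + b" and t: "0 \<le> t"
  shows "norm_Linf M (z t) \<le> c + b * exp (- f * t)"
proof (rule Dini_subsolution_le_solution[where F = "\<lambda>y. f * (c - y)" and N = "\<lambda>s. norm_Linf M (z s)"
      and g = "\<lambda>s. c + b * exp (- f * s)"])
  have M': "emeasure M (space M) \<noteq> 0" using M by (simp add: M_def)
  have rows: "AE x in M. integrable M (\<gamma> x) \<and> (\<forall>y\<in>\<Omega>. 0 \<le> \<gamma> x y) \<and> (\<integral>y. \<gamma> x y \<partial>M) \<le> g"
    using admissible_kernel_rows[OF ker \<Omega> g] unfolding M_def .
  show "antimono (\<lambda>y. f * (c - y))" using f by (auto intro!: antimonoI mult_left_mono)
  show "continuous_on {0..} (\<lambda>s. norm_Linf M (z s))"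
    unfolding continuous_on_def using has_Linf_derivative_imp_tendsto_norm[OF M' z(1) deriv] by blast
  show "\<forall>\<^sub>F s in at_right \<tau>.
      norm_Linf M (z s) \<le> norm_Linf M (z \<tau>) + (s - \<tau>) * (f * (c - norm_Linf M (z \<tau>)) + \<epsilon>)"
    if "0 \<le> \<tau>" "0 < \<epsilon>" for \<tau> \<epsilon>
    using norm_Linf_right_Dini_le[where \<Omega>=\<Omega>, folded M_def, OF M rows d z
        deriv[OF \<open>0 \<le> \<tau>\<close>] sub[OF \<open>0 \<le> \<tau>\<close>] that] .
  show "((\<lambda>s. c + b * exp (- f * s)) has_real_derivative f * (c - (c + b * exp (- f * \<tau>)))) (at \<tau>)" for \<tau>
    by (rule derivative_eq_intros refl | simp add: algebra_simps)+
qed (use init t in auto)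

lemma Limsup_at_top_le_exp_decay:
  fixes X :: "real \<Rightarrow> ereal"
  assumes X: "\<And>t. 0 \<le> t \<Longrightarrow> X t \<le> ereal (c + b * exp (- f * t))" and f: "0 < f"
  shows "Limsup at_top X \<le> ereal c"
proof -
  have "filterlim (\<lambda>t. - f * t) at_bot at_top"
    using f by (intro filterlim_tendsto_neg_mult_at_bot[OF tendsto_const] filterlim_ident) auto
  then have "((\<lambda>t. c + b * exp (- f * t)) \<longlongrightarrow> c + b * 0) at_top"
    by (intro tendsto_intros filterlim_compose[OF exp_at_bot])
  then have "Limsup at_top (\<lambda>t. ereal (c + b * exp (- f * t))) = ereal c"
    by (intro lim_imp_Limsup) (simp_all add: lim_ereal)
  moreover have "Limsup at_top X \<le> Limsup at_top (\<lambda>t. ereal (c + b * exp (- f * t)))"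
    using X by (intro Limsup_mono) (auto simp: eventually_at_top_linorder)
  ultimately show ?thesis by simp
qed

section \<open>The Gray-Scott system\<close>

locale gray_scott_solution =
  fixes \<Omega> :: "'a::euclidean_space set" and M :: "'a measure"
    and d1 d2 f \<kappa> ginf :: real and \<gamma>1 \<gamma>2 :: "'a \<Rightarrow> 'a \<Rightarrow> real"
    and u v u' v' :: "real \<Rightarrow> 'a \<Rightarrow> real"
  assumes M_eq: "M = lebesgue_on \<Omega>"
    and open_domain: "open \<Omega>" and nonempty_domain: "\<Omega> \<noteq> {}"
    and params: "0 \<le> d1" "0 \<le> d2" "0 < f" "0 \<le> \<kappa>" "0 \<le> ginf"
    and ker1: "admissible_kernel \<Omega> ginf \<gamma>1" and ker2: "admissible_kernel \<Omega> ginf \<gamma>2"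
    and C1u: "C1_Linf M u u'" and C1v: "C1_Linf M v v'"
    and nonneg: "\<And>t. 0 \<le> t \<Longrightarrow> in_Linf_pos M (u t) \<and> in_Linf_pos M (v t)"
    and eq_u: "\<And>t. 0 \<le> t \<Longrightarrow> AE x in M. u' t x =
                 d1 * Gamma_op \<Omega> \<gamma>1 (u t) x - u t x * (v t x)\<^sup>2 + f * (1 - u t x)"
    and eq_v: "\<And>t. 0 \<le> t \<Longrightarrow> AE x in M. v' t x =
                 d2 * Gamma_op \<Omega> \<gamma>2 (v t) x + u t x * (v t x)\<^sup>2 - (f + \<kappa>) * v t x"
begin

lemma emeasure_domain_nonzero: "emeasure M \<Omega> \<noteq> 0"
proof -
  have "\<Omega> \<in> sets lebesgue" using open_domain by (simp add: borel_open)
  moreover have "\<not> negligible \<Omega>" using open_not_negligible open_domain nonempty_domain by blast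
  ultimately show ?thesis
    by (simp add: M_eq emeasure_restrict_space negligible_iff_emeasure0)
qed

lemma space_M: "space M = \<Omega>" by (simp add: M_eq)

lemma nonnull_M: "emeasure M (space M) \<noteq> 0"
  using emeasure_domain_nonzero by (simp add: space_M)

lemma u_Linf: "0 \<le> t \<Longrightarrow> in_Linf M (u t)" and u_nonneg: "0 \<le> t \<Longrightarrow> AE x in M. 0 \<le> u t x"
  and v_Linf: "0 \<le> t \<Longrightarrow> in_Linf M (v t)" and v_nonneg: "0 \<le> t \<Longrightarrow> AE x in M. 0 \<le> v t x"
  using nonneg[of t] by (simp_all add: in_Linf_pos_def)

lemma norm_u_le: "0 \<le> t \<Longrightarrow> norm_Linf M (u t) \<le> 1 + max 0 (norm_Linf M (u 0) - 1) * exp (- f * t)"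
proof (rule norm_Linf_le_exp_decay[where \<Omega> = \<Omega> and \<gamma> = \<gamma>1 and g = ginf and d = d1, folded M_eq])
  show "AE x in M. u' s x \<le> d1 * Gamma_op \<Omega> \<gamma>1 (u s) x + f * (1 - u s x)" if "0 \<le> s" for s
    using eq_u[OF that] u_nonneg[OF that] by eventually_elim simp
qed (use open_domain emeasure_domain_nonzero ker1 params u_Linf u_nonneg
      C1_Linf_imp_has_Linf_derivative[OF C1u] in auto)

lemma norm_u_le_1_plus_initial: "0 \<le> t \<Longrightarrow> norm_Linf M (u t) \<le> 1 + norm_Linf M (u 0)"
proof -
  assume t: "0 \<le> t"
  have "max 0 (norm_Linf M (u 0) - 1) * exp (- f * t) \<le> max 0 (norm_Linf M (u 0) - 1)"
    using t params(3) by (intro mult_left_le) auto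
  then show ?thesis using norm_u_le[OF t] norm_Linf_nonneg[OF nonnull_M, of "u 0"] by linarith
qed

lemma AE_u_bound:
  assumes t: "0 \<le> t"
  shows "AE x in M. 0 \<le> u t x \<and> u t x \<le> 1 + exp (- f * t) * max 0 (norm_Linf M (u 0) - 1)"
  using u_nonneg[OF t] AE_abs_le_norm_Linf[OF u_Linf[OF t] nonnull_M]
proof eventually_elim
  case (elim x)
  then show ?case using norm_u_le[OF t] by (simp add: mult.commute)
qed

lemma Limsup_Linf_norm_u_le_1: "Limsup at_top (\<lambda>t. Linf_norm M (u t)) \<le> 1"
proof -
  have "Linf_norm M (u t) \<le> ereal (1 + max 0 (norm_Linf M (u 0) - 1) * exp (- f * t))" if "0 \<le> t" for t
    using norm_u_le[OF that] Linf_norm_eq_ereal[OF u_Linf[OF that] nonnull_M] by (metis ereal_less_eq(3))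
  then have "Limsup at_top (\<lambda>t. Linf_norm M (u t)) \<le> ereal 1"
    by (rule Limsup_at_top_le_exp_decay[OF _ params(3)])
  then show ?thesis by (simp add: one_ereal_def)
qed

lemma Linf_norm_u_le_1:
  assumes "Linf_norm M (u 0) \<le> 1" and t: "0 \<le> t"
  shows "Linf_norm M (u t) \<le> 1"
proof -
  have "norm_Linf M (u 0) \<le> 1"
    using assms(1) Linf_norm_eq_ereal[OF u_Linf nonnull_M, of 0] by (metis ereal_less_eq(3) one_ereal_def order.refl)
  then have "norm_Linf M (u t) \<le> 1" using norm_u_le[OF t] by simp
  then show ?thesis using Linf_norm_eq_ereal[OF u_Linf[OF t] nonnull_M] by (metis ereal_less_eq(3) one_ereal_def)
qed

lemma diffusion_mismatch_le:
  assumes \<mu>: "AE x in M. (\<integral>y. \<bar>\<gamma>1 x y - \<gamma>2 x y\<bar> \<partial>M) \<le> \<mu>" and t: "0 \<le> t"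
  shows "AE x in M. d1 * Gamma_op \<Omega> \<gamma>1 (u t) x - d2 * Gamma_op \<Omega> \<gamma>2 (u t) x
           \<le> (\<bar>d1 - d2\<bar> * ginf + \<mu> * d2) * (1 + norm_Linf M (u 0))"
proof -
  have u_meas: "u t \<in> borel_measurable M"
    using u_Linf[OF t] by (simp add: in_Linf_def)
  have u_between: "AE y in M. 0 \<le> u t y \<and> u t y \<le> norm_Linf M (u t)"
    using u_nonneg[OF t] AE_abs_le_norm_Linf[OF u_Linf[OF t] nonnull_M] by eventually_elim auto
  from admissible_kernel_rows[OF ker1 open_domain params(5), folded M_eq]
    admissible_kernel_rows[OF ker2 open_domain params(5), folded M_eq] \<mu> u_between
  show ?thesis
  proof eventually_elim
    case (elim x)
    let ?g1 = "\<integral>y. \<gamma>1 x y \<partial>M" and ?I = "\<integral>y. \<bar>\<gamma>1 x y - \<gamma>2 x y\<bar> \<partial>M"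
    have "d1 * Gamma_op \<Omega> \<gamma>1 (u t) x - d2 * Gamma_op \<Omega> \<gamma>2 (u t) x
        \<le> norm_Linf M (u t) * (\<bar>d1 - d2\<bar> * ?g1 + d2 * ?I)"
      using elim u_meas u_between params(2)
      by (intro Gamma_op_diff_le[where \<Omega> = \<Omega> and \<gamma> = \<gamma>1 and \<gamma>' = \<gamma>2 and x = x, folded M_eq]) auto
    also have "\<dots> \<le> (1 + norm_Linf M (u 0)) * (\<bar>d1 - d2\<bar> * ginf + \<mu> * d2)"
    proof (rule mult_mono[OF norm_u_le_1_plus_initial[OF t]])
      have "0 \<le> ?g1" using elim(1) by (intro integral_nonneg_AE AE_I2) (auto simp: space_M)
      then show "0 \<le> \<bar>d1 - d2\<bar> * ?g1 + d2 * ?I" using params(2) by simp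
      show "\<bar>d1 - d2\<bar> * ?g1 + d2 * ?I \<le> \<bar>d1 - d2\<bar> * ginf + \<mu> * d2"
      proof (rule add_mono)
        show "\<bar>d1 - d2\<bar> * ?g1 \<le> \<bar>d1 - d2\<bar> * ginf" using elim(1) by (intro mult_left_mono) auto
        show "d2 * ?I \<le> \<mu> * d2" using elim(3) params(2) by (metis mult.commute mult_left_mono)
      qed
    qed (use norm_Linf_nonneg[OF nonnull_M] in auto)
    finally show ?case by (simp add: mult.commute)
  qed
qed

lemma uv_subsolution:
  assumes \<mu>: "AE x in M. (\<integral>y. \<bar>\<gamma>1 x y - \<gamma>2 x y\<bar> \<partial>M) \<le> \<mu>" and t: "0 \<le> t"
  defines "K \<equiv> (\<bar>d1 - d2\<bar> * ginf + \<mu> * d2) * (1 + norm_Linf M (u 0))"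
  shows "AE x in M. u' t x + v' t x
           \<le> d2 * Gamma_op \<Omega> \<gamma>2 (\<lambda>y. u t y + v t y) x + f * ((K + f) / f - (u t x + v t x))"
  using eq_u[OF t] eq_v[OF t] admissible_kernel_rows[OF ker2 open_domain params(5), folded M_eq]
    diffusion_mismatch_le[OF \<mu> t] v_nonneg[OF t]
proof eventually_elim
  case (elim x)
  have "Gamma_op \<Omega> \<gamma>2 (\<lambda>y. u t y + v t y) x = Gamma_op \<Omega> \<gamma>2 (u t) x + Gamma_op \<Omega> \<gamma>2 (v t) x"
    using elim(3) u_Linf[OF t] v_Linf[OF t] AE_abs_le_norm_Linf[OF u_Linf[OF t] nonnull_M]
      AE_abs_le_norm_Linf[OF v_Linf[OF t] nonnull_M]
    by (intro Gamma_op_add[where \<Omega> = \<Omega> and \<gamma> = \<gamma>2 and x = x, folded M_eq]) (auto simp: in_Linf_def)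
  then have "u' t x + v' t x = d2 * Gamma_op \<Omega> \<gamma>2 (\<lambda>y. u t y + v t y) x
      + (d1 * Gamma_op \<Omega> \<gamma>1 (u t) x - d2 * Gamma_op \<Omega> \<gamma>2 (u t) x) + f - f * (u t x + v t x) - \<kappa> * v t x"
    using elim(1,2) by (simp add: algebra_simps)
  also have "\<dots> \<le> d2 * Gamma_op \<Omega> \<gamma>2 (\<lambda>y. u t y + v t y) x + K + f - f * (u t x + v t x)"
    using elim(4) mult_nonneg_nonneg[OF params(4) elim(5)] unfolding K_def by linarith
  also have "\<dots> = d2 * Gamma_op \<Omega> \<gamma>2 (\<lambda>y. u t y + v t y) x + f * ((K + f) / f - (u t x + v t x))"
    using params(3) by (simp add: field_simps)
  finally show ?case .
qed

lemma norm_uv_le: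
  assumes \<mu>: "AE x in M. (\<integral>y. \<bar>\<gamma>1 x y - \<gamma>2 x y\<bar> \<partial>M) \<le> \<mu>" and t: "0 \<le> t"
  defines "K \<equiv> (\<bar>d1 - d2\<bar> * ginf + \<mu> * d2) * (1 + norm_Linf M (u 0))"
  shows "norm_Linf M (\<lambda>x. u t x + v t x)
           \<le> exp (- t * f) * norm_Linf M (\<lambda>x. u 0 x + v 0 x) + (1 - exp (- t * f)) / f * (K + f)"
proof -
  define c where "c = (K + f) / f"
  define W0 where "W0 = norm_Linf M (\<lambda>x. u 0 x + v 0 x)"
  have "norm_Linf M (\<lambda>x. u t x + v t x) \<le> c + (W0 - c) * exp (- f * t)"
  proof (rule norm_Linf_le_exp_decay[where \<Omega> = \<Omega> and \<gamma> = \<gamma>2 and g = ginf and d = d2 and c = c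
        and z = "\<lambda>s x. u s x + v s x" and z' = "\<lambda>s x. u' s x + v' s x", folded M_eq])
    show "has_Linf_derivative M (\<lambda>s x. u s x + v s x) (\<lambda>x. u' s x + v' s x) s" if "0 \<le> s" for s
      using C1_Linf_imp_has_Linf_derivative[OF C1u that] C1_Linf_imp_has_Linf_derivative[OF C1v that]
      by (rule has_Linf_derivative_add)
    show "AE x in M. u' s x + v' s x
        \<le> d2 * Gamma_op \<Omega> \<gamma>2 (\<lambda>y. u s y + v s y) x + f * (c - (u s x + v s x))" if "0 \<le> s" for s
      using uv_subsolution[OF \<mu> that] unfolding c_def K_def .
    show "AE x in M. 0 \<le> u s x + v s x" if "0 \<le> s" for s
      using u_nonneg[OF that] v_nonneg[OF that] by eventually_elim simp
  qed (use open_domain emeasure_domain_nonzero ker2 params t in_Linf_add[OF u_Linf v_Linf] in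
      \<open>auto simp: W0_def\<close>)
  also have "\<dots> = exp (- t * f) * W0 + (1 - exp (- t * f)) / f * (K + f)"
    using params(3) by (simp add: c_def field_simps mult.commute)
  finally show ?thesis by (simp add: W0_def)
qed

text \<open>The paper's form of the bound, with the constant K of norm_uv_le doubled.\<close>

lemma AE_uv_bound:
  assumes \<mu>: "AE x in M. (\<integral>y. \<bar>\<gamma>1 x y - \<gamma>2 x y\<bar> \<partial>M) \<le> \<mu>" "0 \<le> \<mu>" and t: "0 \<le> t"
  shows "AE x in M. 0 \<le> u t x + v t x \<and>
    u t x + v t x \<le> exp (- t * f) * norm_Linf M (\<lambda>x. u 0 x + v 0 x)
      + (1 - exp (- t * f)) / f * (2 * (\<bar>d1 - d2\<bar> * ginf + \<mu> * d2) * (1 + norm_Linf M (u 0)) + f)"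
proof -
  let ?A = "\<bar>d1 - d2\<bar> * ginf + \<mu> * d2" and ?B = "1 + norm_Linf M (u 0)"
  have "0 \<le> ?A * ?B"
    using \<mu>(2) params norm_Linf_nonneg[OF nonnull_M, of "u 0"] by simp
  then have "?A * ?B + f \<le> 2 * ?A * ?B + f" unfolding mult.assoc by linarith
  moreover have "0 \<le> (1 - exp (- t * f)) / f" using t params(3) by simp
  ultimately have "(1 - exp (- t * f)) / f * (?A * ?B + f) \<le> (1 - exp (- t * f)) / f * (2 * ?A * ?B + f)"
    by (rule mult_left_mono)
  then have bound: "norm_Linf M (\<lambda>x. u t x + v t x)
      \<le> exp (- t * f) * norm_Linf M (\<lambda>x. u 0 x + v 0 x) + (1 - exp (- t * f)) / f * (2 * ?A * ?B + f)"
    using norm_uv_le[OF \<mu>(1) t] by linarith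
  from u_nonneg[OF t] v_nonneg[OF t] AE_abs_le_norm_Linf[OF in_Linf_add[OF u_Linf[OF t] v_Linf[OF t]] nonnull_M]
  show ?thesis
  proof eventually_elim
    case (elim x)
    with bound show ?case by simp
  qed
qed

end

theorem corollary2p3:
  fixes \<Omega> :: "'a::euclidean_space set"
    and d1 d2 f \<kappa> ginf :: real
    and \<gamma>1 \<gamma>2 :: "'a \<Rightarrow> 'a \<Rightarrow> real"
    and u0 v0 :: "'a \<Rightarrow> real"
    and u v u' v' :: "real \<Rightarrow> 'a \<Rightarrow> real"
  defines "M \<equiv> lebesgue_on \<Omega>"
  defines "m \<equiv> esssup M (\<lambda>x. ereal (\<integral>y. \<bar>\<gamma>1 x y - \<gamma>2 x y\<bar> \<partial>M))"
  assumes dom: "open \<Omega>" "connected \<Omega>" "bounded \<Omega>" "\<Omega> \<noteq> {}"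
    and params: "0 < d1" "0 < d2" "0 < f" "0 < \<kappa>"
    and ginf: "1 \<le> ginf"
    and ker1: "admissible_kernel \<Omega> ginf \<gamma>1"
    and ker2: "admissible_kernel \<Omega> ginf \<gamma>2"
    and init_pos: "in_Linf_pos M u0" "in_Linf_pos M v0"
    and C1u: "C1_Linf M u u'" and C1v: "C1_Linf M v v'"
    and pos: "\<forall>t\<ge>0. in_Linf_pos M (u t) \<and> in_Linf_pos M (v t)"
    and eq_u: "\<forall>t\<ge>0. AE x in M. u' t x =
                 d1 * Gamma_op \<Omega> \<gamma>1 (u t) x - u t x * (v t x)\<^sup>2 + f * (1 - u t x)"
    and eq_v: "\<forall>t\<ge>0. AE x in M. v' t x =
                 d2 * Gamma_op \<Omega> \<gamma>2 (v t) x + u t x * (v t x)\<^sup>2 - (f + \<kappa>) * v t x"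
    and init: "AE x in M. u 0 x = u0 x" "AE x in M. v 0 x = v0 x"
  shows "m \<le> ereal (2 * ginf)
    \<and> (\<forall>t\<ge>0. AE x in M. 0 \<le> u t x \<and>
          u t x \<le> 1 + exp (- f * t) * max 0 (real_of_ereal (Linf_norm M u0) - 1))
    \<and> (\<forall>t\<ge>0. AE x in M. 0 \<le> u t x + v t x \<and>
          u t x + v t x \<le> exp (- t * f) * real_of_ereal (Linf_norm M (\<lambda>y. u0 y + v0 y))
            + (1 - exp (- t * f)) / f *
              (2 * (\<bar>d1 - d2\<bar> * ginf + real_of_ereal m * d2) * (1 + real_of_ereal (Linf_norm M u0)) + f))
    \<and> Limsup at_top (\<lambda>t. Linf_norm M (u t)) \<le> 1
    \<and> (Linf_norm M u0 \<le> 1 \<longrightarrow> (\<forall>t\<ge>0. Linf_norm M (u t) \<le> 1))"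
proof -
  interpret gs: gray_scott_solution \<Omega> M d1 d2 f \<kappa> ginf \<gamma>1 \<gamma>2 u v u' v'
    using dom params ginf ker1 ker2 C1u C1v pos eq_u eq_v by unfold_locales (auto simp: M_def)
  have init_norms: "Linf_norm M (u 0) = Linf_norm M u0"
      "Linf_norm M (\<lambda>x. u 0 x + v 0 x) = Linf_norm M (\<lambda>x. u0 x + v0 x)"
    using init gs.u_Linf[of 0] gs.v_Linf[of 0] init_pos
    by (auto intro!: Linf_norm_AE_cong simp: in_Linf_pos_def in_Linf_def elim: eventually_elim2)
  have "(\<lambda>x. \<integral>y. \<bar>\<gamma>1 x y - \<gamma>2 x y\<bar> \<partial>M) \<in> borel_measurable M"
    using ker1 ker2 dom(1) unfolding M_def admissible_kernel_def
    by (intro borel_measurable_kernel_distance) auto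
  moreover have "AE x in M. (\<integral>y. \<bar>\<gamma>1 x y - \<gamma>2 x y\<bar> \<partial>M) \<le> 2 * ginf"
    unfolding M_def using ker1 ker2 dom(1) ginf by (intro AE_kernel_distance_le) auto
  ultimately have m_le: "m \<le> ereal (2 * ginf)"
    unfolding m_def by (intro esssup_I) auto
  then have m_AE: "AE x in M. (\<integral>y. \<bar>\<gamma>1 x y - \<gamma>2 x y\<bar> \<partial>M) \<le> real_of_ereal m"
    unfolding m_def by (intro AE_le_real_of_esssup[OF gs.nonnull_M]) auto
  have "0 \<le> m"
    unfolding m_def by (intro esssup_nonneg[OF gs.nonnull_M]) (simp add: integral_nonneg_AE)
  then have "0 \<le> real_of_ereal m" by (rule real_of_ereal_pos)
  then show ?thesis
    using m_le gs.AE_u_bound gs.AE_uv_bound[OF m_AE] gs.Limsup_Linf_norm_u_le_1 gs.Linf_norm_u_le_1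
    by (simp add: init_norms)
qed

end
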